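(* Let $\mathcal{Q}\subset\mathbb{R}^n$ be compact and let $(\mathcal{E},\mathcal{D})$ be a compression code for $\mathcal{Q}$ operating at rate $r$ and distortion $\delta$, with codebook $\mathcal{C}$. Let $\eta>1$ and $d\ge\frac{\eta r}{\log_2(1/({\rm e}\delta))}$, and let $A\in\mathbb{R}^{d\times n}$ have i.i.d. $\mathcal{N}(0,1)$ entries. For ${\bf x}_o\in\mathcal{Q}$ let ${\bf y}_o=A{\bf x}_o+{\bf z}$, where ${\bf z}\in\mathbb{R}^d$ (possibly depending on $A$ and ${\bf x}_o$) satisfies $\|{\bf z}\|_2\le\zeta$, and let $\hat{{\bf x}}_o$ be any element of $\arg\min_{{\bf c}\in\mathcal{C}}\|{\bf y}_o-A{\bf c}\|_2^2$. Assume $\zeta=\delta$ and $\frac{\eta}{\log\frac1{{\rm e}\delta}}<\epsilon$ for some $\epsilon>0$. Then for every ${\bf x}_o\in\mathcal{Q}$, \[ \mathbb{P}\big(\|\hat{{\bf x}}_o-{\bf x}_o\|_2\ge\theta'\zeta^{1-(1+\epsilon)/\eta}\big)\le{\rm e}^{-d/2}+{\rm e}^{-0.3\epsilon r}, \] where $\theta'=2{\rm e}^{-(1+\epsilon)/\eta}+2/\sqrt d$.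
   Context: A compression code $(\mathcal{E},\mathcal{D})$ for $\mathcal{Q}$ at rate $r$ consists of an encoder $\mathcal{E}:\mathcal{Q}\to\{1,2,\dots,2^r\}$ and a decoder $\mathcal{D}:\{1,\dots,2^r\}\to\mathbb{R}^n$; its codebook is $\mathcal{C}=\{\mathcal{D}(\mathcal{E}({\bf x})):{\bf x}\in\mathcal{Q}\}$, and its distortion is $\delta=\sup_{{\bf x}\in\mathcal{Q}}\|{\bf x}-\mathcal{D}(\mathcal{E}({\bf x}))\|_2$. $\log$ is the natural logarithm, $\log_2$ the base-2 logarithm. The probability is over $A$. *)

theory Defs
  imports "HOL-Probability.Probability"
begin

definition is_compression_code :: "('a \<Rightarrow> nat) \<Rightarrow> nat \<Rightarrow> 'a set \<Rightarrow> bool" where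
  "is_compression_code E r Q \<longleftrightarrow> (\<forall>x\<in>Q. E x \<in> {1..2^r})"

definition codebook :: "('a \<Rightarrow> nat) \<Rightarrow> (nat \<Rightarrow> 'b) \<Rightarrow> 'a set \<Rightarrow> 'b set" where
  "codebook E D Q = (\<lambda>x. D (E x)) ` Q"

definition distortion :: "(real^'n \<Rightarrow> nat) \<Rightarrow> (nat \<Rightarrow> real^'n) \<Rightarrow> (real^'n) set \<Rightarrow> real" where
  "distortion E D Q = (SUP x\<in>Q. norm (x - D (E x)))"

text \<open>Random d x n matrix (d = CARD('d), n = CARD('n)) with i.i.d. N(0,1) entries.\<close>
definition gaussian_matrix :: "'w measure \<Rightarrow> ('w \<Rightarrow> real^'n^'d) \<Rightarrow> bool" where
  "gaussian_matrix M A \<longleftrightarrow>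
     prob_space M \<and>
     prob_space.indep_vars M (\<lambda>_. borel) (\<lambda>(i,j) w. A w $ i $ j) UNIV \<and>
     (\<forall>i j. distributed M lborel (\<lambda>w. A w $ i $ j) std_normal_density)"

definition ls_argmin :: "real^'n^'d \<Rightarrow> real^'d \<Rightarrow> (real^'n) set \<Rightarrow> (real^'n) set" where
  "ls_argmin A y C = {c \<in> C. \<forall>c'\<in>C. (norm (y - A *v c))^2 \<le> (norm (y - A *v c'))^2}"

end

theory Submission
  imports Defs
begin

(*
  For fixed u \<noteq> 0 the coordinates of A u are i.i.d. N(0, |u|^2), so |A u|^2 is a scaled
  chi-square variable with d degrees of freedom, and Chernoff's bound applied to its moment
  generating function controls both of its tails. Let c0 be the codeword of xo, so that
  |xo - c0| \<le> \<delta>. Minimality of the decoded codeword xhat gives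
  |A (xhat - xo)| \<le> |A (xo - c0)| + 2 \<zeta>, and by the upper tail |A (xo - c0)| \<le> 2 sqrt d \<delta>
  except with probability e^(-d/2). A decoding error of size T then needs a codeword c with
  |c - xo| \<ge> T but |A (c - xo)| \<le> 2 sqrt d \<delta> + 2 \<zeta>; the lower tail and a union bound over
  the at most 2^r codewords bound this by 2^r e^(d/2) ((2 sqrt d \<delta> + 2 \<zeta>) / (sqrt d T))^d,
  which the choice of \<theta>' and of d makes at most e^(-0.3 \<epsilon> r).
*)

lemma normal_density_mult_exp_square:
  fixes \<sigma> s x :: real
  assumes "\<sigma> > 0" "1 - 2 * s * \<sigma>\<^sup>2 > 0"
  shows "normal_density 0 \<sigma> x * exp (s * x\<^sup>2) =
     1 / sqrt (1 - 2 * s * \<sigma>\<^sup>2) * normal_density 0 (\<sigma> / sqrt (1 - 2 * s * \<sigma>\<^sup>2)) x"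
proof -
  define q where "q = 1 - 2 * s * \<sigma>\<^sup>2"
  have q: "q > 0" using assms q_def by simp
  have var: "(\<sigma> / sqrt q)\<^sup>2 = \<sigma>\<^sup>2 / q" using q by (simp add: power_divide)
  have norm_const: "sqrt (2 * pi * (\<sigma>\<^sup>2 / q)) = sqrt (2 * pi * \<sigma>\<^sup>2) / sqrt q"
    by (simp add: real_sqrt_divide)
  have expo: "- x\<^sup>2 / (2 * (\<sigma>\<^sup>2 / q)) = - x\<^sup>2 / (2 * \<sigma>\<^sup>2) + s * x\<^sup>2"
    using q assms(1) unfolding q_def by (simp add: field_simps)
  have "exp (s * x\<^sup>2) * exp (- (x\<^sup>2 / (2 * \<sigma>\<^sup>2))) = exp (- (q * x\<^sup>2 / (2 * \<sigma>\<^sup>2)))"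
    unfolding exp_add[symmetric] using assms(1) unfolding q_def by (simp add: field_simps)
  then show ?thesis
    unfolding normal_density_def q_def[symmetric] var norm_const expo
    using q assms(1) by (simp add: field_simps)
qed

lemma nn_integral_exp_square_normal:
  fixes Y :: "'w \<Rightarrow> real"
  assumes "distributed M lborel Y (normal_density 0 \<sigma>)" "\<sigma> > 0" "1 - 2 * s * \<sigma>\<^sup>2 > 0"
  shows "(\<integral>\<^sup>+\<omega>. ennreal (exp (s * (Y \<omega>)\<^sup>2)) \<partial>M) = ennreal (1 / sqrt (1 - 2 * s * \<sigma>\<^sup>2))"
proof -
  define \<sigma>' where "\<sigma>' = \<sigma> / sqrt (1 - 2 * s * \<sigma>\<^sup>2)"
  have "(\<integral>\<^sup>+\<omega>. ennreal (exp (s * (Y \<omega>)\<^sup>2)) \<partial>M)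
      = (\<integral>\<^sup>+x. ennreal (normal_density 0 \<sigma> x) * ennreal (exp (s * x\<^sup>2)) \<partial>lborel)"
    by (rule distributed_nn_integral[symmetric, OF assms(1)]) simp
  also have "\<dots> = (\<integral>\<^sup>+x. ennreal (1 / sqrt (1 - 2 * s * \<sigma>\<^sup>2)) * ennreal (normal_density 0 \<sigma>' x) \<partial>lborel)"
    using assms(3) unfolding \<sigma>'_def
    by (intro nn_integral_cong)
       (simp add: normal_density_mult_exp_square[OF assms(2,3)] ennreal_mult'[symmetric])
  also have "\<dots> = ennreal (1 / sqrt (1 - 2 * s * \<sigma>\<^sup>2)) * (\<integral>\<^sup>+x. ennreal (normal_density 0 \<sigma>' x) \<partial>lborel)"
    by (rule nn_integral_cmult) simp
  also have "(\<integral>\<^sup>+x. ennreal (normal_density 0 \<sigma>' x) \<partial>lborel) = 1"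
    using assms(2,3) unfolding \<sigma>'_def by (subst nn_integral_eq_integral) auto
  finally show ?thesis by simp
qed

lemma (in prob_space) indep_vars_compose_restrict:
  assumes "indep_vars (\<lambda>_. borel) X I" "\<And>j. j \<in> L \<Longrightarrow> K j \<subseteq> I" "disjoint_family_on K L"
    "\<And>j. j \<in> L \<Longrightarrow> G j \<in> borel_measurable (PiM (K j) (\<lambda>_. borel))"
  shows "indep_vars (\<lambda>_. borel) (\<lambda>j \<omega>. G j (restrict (\<lambda>i. X i \<omega>) (K j))) L"
proof -
  have "indep_vars (\<lambda>j. PiM (K j) (\<lambda>_. borel)) (\<lambda>j \<omega>. restrict (\<lambda>i. X i \<omega>) (K j)) L"
    by (rule indep_vars_restrict) (use assms in auto)
  from indep_vars_compose2[OF this, of G "\<lambda>_. borel"] assms(4)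
  show ?thesis by simp
qed

lemma (in prob_space) Chernoff_measure_ge:
  assumes "s > 0" "f \<in> borel_measurable M"
    "(\<integral>\<^sup>+x. ennreal (exp (s * f x)) \<partial>M) = ennreal m" "m \<ge> 0"
  shows "measure M {x \<in> space M. a \<le> f x} \<le> exp (- s * a) * m"
proof -
  have "emeasure M {x \<in> space M. a \<le> f x}
      \<le> ennreal (exp (- s * a)) * (\<integral>\<^sup>+x. ennreal (exp (s * f x)) * indicator (space M) x \<partial>M)"
    using assms(1,2) by (intro Chernoff_ineq_nn_integral_ge) auto
  also have "(\<integral>\<^sup>+x. ennreal (exp (s * f x)) * indicator (space M) x \<partial>M) = ennreal m"
    using assms(3) by (metis (no_types, lifting) indicator_simps(1) mult.right_neutral nn_integral_cong)
  finally show ?thesis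
    using assms(4) by (simp add: emeasure_eq_measure ennreal_mult[symmetric] ennreal_le_iff)
qed

lemma norm_square_vec: "(norm (v :: real^'d))\<^sup>2 = (\<Sum>i\<in>UNIV. (v $ i)\<^sup>2)"
  unfolding norm_vec_def L2_set_def by (simp add: sum_nonneg)

lemma matrix_vector_mult_component: "(A *v u) $ i = (\<Sum>j\<in>UNIV. A $ i $ j * u $ j)"
  by (simp add: matrix_vector_mult_def)

lemma gaussian_matrixD:
  assumes "gaussian_matrix M A"
  shows "prob_space M"
    and "prob_space.indep_vars M (\<lambda>_. borel) (\<lambda>(i,j) w. A w $ i $ j) UNIV"
    and "distributed M lborel (\<lambda>w. A w $ i $ j) std_normal_density"
  using assms unfolding gaussian_matrix_def by auto

lemma gaussian_matrix_norm_square_measurable: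
  assumes "gaussian_matrix M A"
  shows "(\<lambda>\<omega>. (norm (A \<omega> *v u))\<^sup>2) \<in> borel_measurable M"
proof -
  have [measurable]: "(\<lambda>w. A w $ i $ j) \<in> borel_measurable M" for i j
    using gaussian_matrixD(3)[OF assms] by (metis distributed_measurable measurable_lborel1)
  have "(\<lambda>\<omega>. \<Sum>i\<in>UNIV. (\<Sum>j\<in>UNIV. A \<omega> $ i $ j * u $ j)\<^sup>2) \<in> borel_measurable M"
    by measurable
  then show ?thesis by (simp add: norm_square_vec matrix_vector_mult_component)
qed

lemma gaussian_matrix_norm_measurable:
  assumes "gaussian_matrix M A"
  shows "(\<lambda>\<omega>. norm (A \<omega> *v u)) \<in> borel_measurable M"
  using measurable_compose[OF gaussian_matrix_norm_square_measurable[OF assms] borel_measurable_sqrt]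
  by simp

lemma gaussian_matrix_row_normal:
  fixes A :: "'w \<Rightarrow> real^'n^'d" and u :: "real^'n"
  assumes "gaussian_matrix M A" "u \<noteq> 0"
  shows "distributed M lborel (\<lambda>\<omega>. (A \<omega> *v u) $ i) (normal_density 0 (norm u))"
proof -
  interpret prob_space M by (rule gaussian_matrixD(1)[OF assms(1)])
  \<comment> \<open>Zero coordinates of u are dropped: \<open>sum_indep_normal\<close> needs positive standard deviations.\<close>
  define J where "J = {j. u $ j \<noteq> 0}"
  have J: "J \<noteq> {}" using assms(2) by (auto simp: J_def vec_eq_iff)
  have row_sum: "(A \<omega> *v u) $ i = (\<Sum>j\<in>J. A \<omega> $ i $ j * u $ j)" for \<omega>
    unfolding matrix_vector_mult_component by (rule sum.mono_neutral_right) (auto simp: J_def)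
  have "indep_vars (\<lambda>_. borel)
      (\<lambda>j \<omega>. (\<lambda>g. g (i,j) * u $ j) (restrict (\<lambda>p. (\<lambda>(i,j) w. A w $ i $ j) p \<omega>) {(i,j)})) J"
    by (rule indep_vars_compose_restrict[OF gaussian_matrixD(2)[OF assms(1)]])
       (auto simp: disjoint_family_on_def)
  then have indep: "indep_vars (\<lambda>_. borel) (\<lambda>j \<omega>. A \<omega> $ i $ j * u $ j) J"
    by (rule indep_vars_cong[THEN iffD1, rotated 3]) auto
  have summand: "distributed M lborel (\<lambda>\<omega>. A \<omega> $ i $ j * u $ j) (normal_density 0 \<bar>u $ j\<bar>)"
    if "j \<in> J" for j
  proof -
    have "distributed M lborel (\<lambda>x. 0 + u $ j * A x $ i $ j) (normal_density (0 + u $ j * 0) (\<bar>u $ j\<bar> * 1))"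
      by (rule normal_density_affine[OF gaussian_matrixD(3)[OF assms(1)]]) (use that J_def in auto)
    then show ?thesis by (simp add: mult.commute)
  qed
  have "distributed M lborel (\<lambda>\<omega>. \<Sum>j\<in>J. A \<omega> $ i $ j * u $ j)
      (normal_density (\<Sum>j\<in>J. 0) (sqrt (\<Sum>j\<in>J. \<bar>u $ j\<bar>\<^sup>2)))"
    by (rule sum_indep_normal[OF _ J indep]) (auto simp: J_def summand)
  moreover have "sqrt (\<Sum>j\<in>J. \<bar>u $ j\<bar>\<^sup>2) = norm u"
    unfolding norm_vec_def L2_set_def by (simp, rule sum.mono_neutral_left) (auto simp: J_def)
  ultimately show ?thesis by (simp add: row_sum)
qed

lemma gaussian_matrix_nn_integral_exp_norm_square:
  fixes A :: "'w \<Rightarrow> real^'n^'d" and u :: "real^'n"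
  assumes "gaussian_matrix M A" "u \<noteq> 0" "1 - 2 * s * (norm u)\<^sup>2 > 0"
  shows "(\<integral>\<^sup>+\<omega>. ennreal (exp (s * (norm (A \<omega> *v u))\<^sup>2)) \<partial>M)
           = ennreal ((1 / sqrt (1 - 2 * s * (norm u)\<^sup>2)) ^ CARD('d))"
proof -
  interpret prob_space M by (rule gaussian_matrixD(1)[OF assms(1)])
  have "indep_vars (\<lambda>_. borel) (\<lambda>i \<omega>. (\<lambda>g. ennreal (exp (s * (\<Sum>j\<in>UNIV. g (i,j) * u $ j)\<^sup>2)))
        (restrict (\<lambda>p. (\<lambda>(i,j) w. A w $ i $ j) p \<omega>) ({i} \<times> UNIV))) UNIV"
    by (rule indep_vars_compose_restrict[OF gaussian_matrixD(2)[OF assms(1)]])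
       (auto simp: disjoint_family_on_def)
  then have indep: "indep_vars (\<lambda>_. borel) (\<lambda>i \<omega>. ennreal (exp (s * ((A \<omega> *v u) $ i)\<^sup>2))) UNIV"
    by (rule indep_vars_cong[THEN iffD1, rotated 3]) (auto simp: matrix_vector_mult_component)
  have "(\<integral>\<^sup>+\<omega>. ennreal (exp (s * (norm (A \<omega> *v u))\<^sup>2)) \<partial>M)
     = (\<integral>\<^sup>+\<omega>. (\<Prod>i\<in>UNIV. ennreal (exp (s * ((A \<omega> *v u) $ i)\<^sup>2))) \<partial>M)"
    by (intro nn_integral_cong) (simp add: norm_square_vec sum_distrib_left exp_sum prod_ennreal)
  also have "\<dots> = (\<Prod>i\<in>UNIV. \<integral>\<^sup>+\<omega>. ennreal (exp (s * ((A \<omega> *v u) $ i)\<^sup>2)) \<partial>M)"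
    by (rule indep_vars_nn_integral[OF _ indep]) auto
  also have "\<dots> = (\<Prod>i\<in>(UNIV::'d set). ennreal (1 / sqrt (1 - 2 * s * (norm u)\<^sup>2)))"
    using assms by (intro prod.cong refl nn_integral_exp_square_normal gaussian_matrix_row_normal) auto
  also have "\<dots> = ennreal ((1 / sqrt (1 - 2 * s * (norm u)\<^sup>2)) ^ CARD('d))"
    unfolding prod_constant by (rule ennreal_power) (use assms(3) in simp)
  finally show ?thesis .
qed

lemma gaussian_matrix_norm_gt_prob:
  fixes A :: "'w \<Rightarrow> real^'n^'d" and u :: "real^'n"
  assumes "gaussian_matrix M A" "norm u \<le> t" "0 \<le> t"
  shows "measure M {\<omega> \<in> space M. 2 * sqrt (real CARD('d)) * t < norm (A \<omega> *v u)}
         \<le> exp (- real CARD('d) / 2)"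
proof (cases "u = 0")
  case True
  moreover have "\<not> 2 * sqrt (real CARD('d)) * t < 0" using assms(3) by (simp add: not_less)
  ultimately show ?thesis by simp
next
  case False
  interpret prob_space M by (rule gaussian_matrixD(1)[OF assms(1)])
  define d where "d = real CARD('d)"
  define \<sigma> where "\<sigma> = norm u"
  have \<sigma>: "\<sigma> > 0" using False \<sigma>_def by simp
  define s where "s = 3 / (8 * \<sigma>\<^sup>2)"
  have "1 - 2 * s * \<sigma>\<^sup>2 = (1/2)\<^sup>2" using \<sigma> unfolding s_def by (simp add: field_simps power2_eq_square)
  then have mgf: "(\<integral>\<^sup>+\<omega>. ennreal (exp (s * (norm (A \<omega> *v u))\<^sup>2)) \<partial>M) = ennreal (2 ^ CARD('d))"
    using gaussian_matrix_nn_integral_exp_norm_square[OF assms(1) False, of s] by (simp add: \<sigma>_def)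
  have "{\<omega> \<in> space M. 2 * sqrt d * t < norm (A \<omega> *v u)}
      \<subseteq> {\<omega> \<in> space M. 4 * d * \<sigma>\<^sup>2 \<le> (norm (A \<omega> *v u))\<^sup>2}"
  proof safe
    fix \<omega> assume "2 * sqrt d * t < norm (A \<omega> *v u)"
    moreover have "2 * sqrt d * \<sigma> \<le> 2 * sqrt d * t" using assms(2) by (simp add: \<sigma>_def d_def)
    ultimately have "2 * sqrt d * \<sigma> \<le> norm (A \<omega> *v u)" by linarith
    then have "(2 * sqrt d * \<sigma>)\<^sup>2 \<le> (norm (A \<omega> *v u))\<^sup>2"
      using \<sigma> by (intro power_mono) (auto simp: d_def)
    then show "4 * d * \<sigma>\<^sup>2 \<le> (norm (A \<omega> *v u))\<^sup>2" by (simp add: power_mult_distrib d_def)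
  qed
  then have "measure M {\<omega> \<in> space M. 2 * sqrt d * t < norm (A \<omega> *v u)}
      \<le> measure M {\<omega> \<in> space M. 4 * d * \<sigma>\<^sup>2 \<le> (norm (A \<omega> *v u))\<^sup>2}"
    by (rule finite_measure_mono) (use gaussian_matrix_norm_square_measurable[OF assms(1)] in measurable)
  also have "\<dots> \<le> exp (- s * (4 * d * \<sigma>\<^sup>2)) * 2 ^ CARD('d)"
    using \<sigma> gaussian_matrix_norm_square_measurable[OF assms(1)] mgf
    by (intro Chernoff_measure_ge) (auto simp: s_def)
  also have "\<dots> = exp (- 3 / 2 * d) * 2 ^ CARD('d)"
    using \<sigma> unfolding s_def by (simp add: field_simps)
  also have "\<dots> \<le> exp (- 3 / 2 * d) * exp d"
  proof -
    have "(2::real) ^ CARD('d) \<le> exp 1 ^ CARD('d)"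
      using exp_ge_add_one_self[of 1] by (intro power_mono) auto
    then show ?thesis by (simp add: d_def exp_of_nat_mult[symmetric])
  qed
  also have "\<dots> = exp (- d / 2)" by (simp flip: exp_add)
  finally show ?thesis by (simp add: d_def)
qed

lemma gaussian_matrix_norm_le_prob:
  fixes A :: "'w \<Rightarrow> real^'n^'d" and u :: "real^'n"
  assumes "gaussian_matrix M A" "0 < T" "T \<le> norm u" "0 < K"
  shows "measure M {\<omega> \<in> space M. norm (A \<omega> *v u) \<le> K}
         \<le> exp (real CARD('d) / 2) * (K / (sqrt (real CARD('d)) * T)) ^ CARD('d)"
proof -
  interpret prob_space M by (rule gaussian_matrixD(1)[OF assms(1)])
  define d where "d = real CARD('d)"
  have d: "d > 0" by (simp add: d_def)
  define \<sigma> where "\<sigma> = norm u"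
  have u: "u \<noteq> 0" using assms(2,3) by auto
  have \<sigma>: "\<sigma> > 0" using u \<sigma>_def by simp
  define s where "s = d / (2 * K\<^sup>2)"
  have s: "s > 0" using d assms(4) by (simp add: s_def)
  define m where "m = 1 / sqrt (1 + 2 * s * \<sigma>\<^sup>2)"
  have "(\<integral>\<^sup>+\<omega>. ennreal (exp (- s * (norm (A \<omega> *v u))\<^sup>2)) \<partial>M) = ennreal (m ^ CARD('d))"
    using gaussian_matrix_nn_integral_exp_norm_square[OF assms(1) u, of "- s"] \<sigma> s
    unfolding m_def \<sigma>_def by (simp add: add_pos_nonneg)
  then have mgf: "(\<integral>\<^sup>+\<omega>. ennreal (exp (s * - (norm (A \<omega> *v u))\<^sup>2)) \<partial>M) = ennreal (m ^ CARD('d))"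
    by simp
  have m_le: "m \<le> K / (sqrt d * T)"
  proof -
    have "sqrt d * \<sigma> / K = sqrt (2 * s * \<sigma>\<^sup>2)"
      using d \<sigma> assms(4) by (simp add: s_def real_sqrt_divide real_sqrt_mult)
    also have "\<dots> \<le> sqrt (1 + 2 * s * \<sigma>\<^sup>2)" by simp
    finally have "sqrt d * \<sigma> \<le> K * sqrt (1 + 2 * s * \<sigma>\<^sup>2)"
      using assms(4) by (simp add: divide_le_eq mult.commute)
    moreover have "sqrt (1 + 2 * s * \<sigma>\<^sup>2) > 0" using s by (simp add: add_pos_nonneg)
    ultimately have "m \<le> K / (sqrt d * \<sigma>)"
      using d \<sigma> unfolding m_def by (simp add: divide_simps mult.commute)
    also have "K / (sqrt d * \<sigma>) \<le> K / (sqrt d * T)"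
      using assms d unfolding \<sigma>_def by (intro divide_left_mono mult_left_mono mult_pos_pos) auto
    finally show ?thesis .
  qed
  have "measure M {\<omega> \<in> space M. norm (A \<omega> *v u) \<le> K}
      = measure M {\<omega> \<in> space M. - K\<^sup>2 \<le> - (norm (A \<omega> *v u))\<^sup>2}"
    using assms(4) by (simp add: abs_le_square_iff[symmetric] del: abs_le_square_iff)
  also have "\<dots> \<le> exp (- s * - K\<^sup>2) * m ^ CARD('d)"
    using s gaussian_matrix_norm_square_measurable[OF assms(1)] mgf
    by (intro Chernoff_measure_ge) (auto simp: m_def)
  also have "\<dots> \<le> exp (d / 2) * (K / (sqrt d * T)) ^ CARD('d)"
    using assms(4) m_le d by (auto simp: s_def m_def add_nonneg_nonneg intro!: power_mono)
  finally show ?thesis by (simp add: d_def)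
qed

lemma codebook_subset_decoder_image:
  "is_compression_code E r Q \<Longrightarrow> codebook E D Q \<subseteq> D ` {1..2^r}"
  unfolding codebook_def is_compression_code_def by auto

lemma finite_codebook: "is_compression_code E r Q \<Longrightarrow> finite (codebook E D Q)"
  by (rule finite_subset[OF codebook_subset_decoder_image]) auto

lemma card_codebook_le:
  assumes "is_compression_code E r Q"
  shows "card (codebook E D Q) \<le> 2 ^ r"
proof -
  have "card (codebook E D Q) \<le> card (D ` {1..2^r})"
    by (rule card_mono[OF _ codebook_subset_decoder_image[OF assms]]) simp
  also have "\<dots> \<le> card {1..(2::nat)^r}" by (rule card_image_le) simp
  finally show ?thesis by simp
qed

lemma norm_diff_decode_le_distortion:
  fixes Q :: "(real^'n) set"
  assumes "compact Q" "is_compression_code E r Q" "x \<in> Q"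
  shows "norm (x - D (E x)) \<le> distortion E D Q"
proof -
  obtain B where B: "\<And>x. x \<in> Q \<Longrightarrow> norm x \<le> B"
    using compact_imp_bounded[OF assms(1)] unfolding bounded_iff by auto
  have "bdd_above ((\<lambda>x. norm (x - D (E x))) ` Q)"
  proof (rule bdd_aboveI2)
    fix x assume x: "x \<in> Q"
    have "E x \<in> {1..2^r}" using assms(2) x unfolding is_compression_code_def by auto
    then have "norm (D (E x)) \<le> (\<Sum>k\<in>{1..2^r}. norm (D k))"
      by (rule member_le_sum) auto
    then show "norm (x - D (E x)) \<le> B + (\<Sum>k\<in>{1..2^r}. norm (D k))"
      using B[OF x] norm_triangle_ineq4[of x "D (E x)"] by linarith
  qed
  then show ?thesis unfolding distortion_def by (rule cSUP_upper[OF assms(3)])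
qed

lemma norm_mult_ls_argmin_diff_le:
  fixes A :: "real^'n^'d"
  assumes "xh \<in> ls_argmin A (A *v xo + z) C" "c \<in> C" "norm z \<le> \<zeta>"
  shows "norm (A *v (xh - xo)) \<le> norm (A *v (xo - c)) + 2 * \<zeta>"
proof -
  define y where "y = A *v xo + z"
  have "(norm (y - A *v xh))\<^sup>2 \<le> (norm (y - A *v c))\<^sup>2"
    using assms(1,2) unfolding ls_argmin_def y_def by auto
  then have "norm (y - A *v xh) \<le> norm (y - A *v c)"
    by (rule power2_le_imp_le) simp
  also have "\<dots> \<le> norm (A *v (xo - c)) + \<zeta>"
    using norm_triangle_ineq[of "A *v (xo - c)" z] assms(3)
    by (simp add: y_def matrix_vector_mult_diff_distrib algebra_simps)
  finally show ?thesis
    using norm_triangle_ineq4[of z "y - A *v xh"] assms(3)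
    by (simp add: y_def matrix_vector_mult_diff_distrib algebra_simps)
qed

lemma (in finite_measure) measure_le_union_bound:
  fixes b :: real
  assumes "S \<subseteq> B \<union> (\<Union>i\<in>I. L i)" "finite I" "B \<in> sets M"
    "\<And>i. i \<in> I \<Longrightarrow> L i \<in> sets M" "\<And>i. i \<in> I \<Longrightarrow> measure M (L i) \<le> b"
  shows "measure M S \<le> measure M B + card I * b"
proof -
  have "measure M S \<le> measure M (B \<union> (\<Union>i\<in>I. L i))"
    using assms by (intro finite_measure_mono) auto
  also have "\<dots> \<le> measure M B + measure M (\<Union>i\<in>I. L i)"
    using assms by (intro measure_subadditive) auto
  also have "measure M (\<Union>i\<in>I. L i) \<le> (\<Sum>i\<in>I. measure M (L i))"
    using assms by (intro finite_measure_subadditive_finite) auto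
  also have "\<dots> \<le> card I * b"
    using sum_mono[of I "\<lambda>i. measure M (L i)" "\<lambda>_. b"] assms(5) by simp
  finally show ?thesis by simp
qed

lemma ls_decoding_error_event_subset:
  fixes A :: "'w \<Rightarrow> real^'n^'d"
  assumes "c0 \<in> C"
  shows "{\<omega> \<in> \<Omega>. \<exists>z :: real^'d. norm z \<le> \<zeta> \<and>
            (\<exists>xhat \<in> ls_argmin (A \<omega>) (A \<omega> *v xo + z) C. norm (xhat - xo) \<ge> T)}
         \<subseteq> {\<omega> \<in> \<Omega>. t < norm (A \<omega> *v (xo - c0))} \<union>
           (\<Union>c\<in>{c \<in> C. T \<le> norm (c - xo)}. {\<omega> \<in> \<Omega>. norm (A \<omega> *v (c - xo)) \<le> t + 2 * \<zeta>})"
  (is "?S \<subseteq> ?B \<union> ?U")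
proof
  fix \<omega> assume "\<omega> \<in> ?S"
  then obtain z xh where \<omega>: "\<omega> \<in> \<Omega>" and z: "norm z \<le> \<zeta>"
    and xh: "xh \<in> ls_argmin (A \<omega>) (A \<omega> *v xo + z) C" "T \<le> norm (xh - xo)"
    by auto
  have "norm (A \<omega> *v (xh - xo)) \<le> norm (A \<omega> *v (xo - c0)) + 2 * \<zeta>"
    by (rule norm_mult_ls_argmin_diff_le[OF xh(1) assms z])
  with \<omega> xh show "\<omega> \<in> ?B \<union> ?U" unfolding ls_argmin_def by force
qed

lemma ls_decoding_error_prob_le:
  fixes Q :: "(real^'n) set" and A :: "'w \<Rightarrow> real^'n^'d"
  assumes "compact Q" "is_compression_code E r Q" "gaussian_matrix M A" "xo \<in> Q"
    "0 < \<zeta>" "0 < T"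
  shows "measure M {w \<in> space M. \<exists>z :: real^'d. norm z \<le> \<zeta> \<and>
            (\<exists>xhat \<in> ls_argmin (A w) (A w *v xo + z) (codebook E D Q). norm (xhat - xo) \<ge> T)}
         \<le> exp (- real CARD('d) / 2) + 2 ^ r * (exp (real CARD('d) / 2) *
             ((2 * sqrt (real CARD('d)) * distortion E D Q + 2 * \<zeta>) / (sqrt (real CARD('d)) * T))
               ^ CARD('d))"
    (is "measure M ?S \<le> _")
proof -
  interpret prob_space M by (rule gaussian_matrixD(1)[OF assms(3)])
  define d where "d = real CARD('d)"
  define \<delta> where "\<delta> = distortion E D Q"
  define C where "C = codebook E D Q"
  define c0 where "c0 = D (E xo)"
  define K where "K = 2 * sqrt d * \<delta> + 2 * \<zeta>"
  have c0: "c0 \<in> C" "norm (xo - c0) \<le> \<delta>"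
    using assms norm_diff_decode_le_distortion[OF assms(1,2,4)]
    unfolding C_def c0_def \<delta>_def codebook_def by auto
  have K: "K > 0" using c0(2) assms(5) unfolding K_def d_def
    by (intro add_nonneg_pos mult_nonneg_nonneg) (auto intro: order_trans[OF norm_ge_zero])
  define B where "B = {\<omega> \<in> space M. 2 * sqrt d * \<delta> < norm (A \<omega> *v (xo - c0))}"
  define L where "L c = {\<omega> \<in> space M. norm (A \<omega> *v (c - xo)) \<le> K}" for c
  define C' where "C' = {c \<in> C. T \<le> norm (c - xo)}"
  have C': "finite C'" "card C' \<le> 2 ^ r"
    using finite_codebook[OF assms(2), of D] card_codebook_le[OF assms(2), of D]
    unfolding C'_def C_def by (auto intro: le_trans[OF card_mono])
  have events: "B \<in> sets M" "L c \<in> sets M" for c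
    unfolding B_def L_def using gaussian_matrix_norm_measurable[OF assms(3)] by measurable
  have tail: "measure M (L c) \<le> exp (d / 2) * (K / (sqrt d * T)) ^ CARD('d)" if "c \<in> C'" for c
    unfolding L_def d_def
    using that assms(6) K by (intro gaussian_matrix_norm_le_prob[OF assms(3)]) (auto simp: C'_def)
  have "?S \<subseteq> B \<union> (\<Union>c\<in>C'. L c)"
    unfolding B_def L_def C'_def K_def C_def[symmetric] by (rule ls_decoding_error_event_subset[OF c0(1)])
  then have "measure M ?S \<le> measure M B + card C' * (exp (d / 2) * (K / (sqrt d * T)) ^ CARD('d))"
    by (rule measure_le_union_bound[OF _ C'(1) events tail])
  also have "\<dots> \<le> exp (- d / 2) + 2 ^ r * (exp (d / 2) * (K / (sqrt d * T)) ^ CARD('d))"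
  proof (intro add_mono mult_right_mono)
    show "measure M B \<le> exp (- d / 2)"
      using c0(2) order_trans[OF norm_ge_zero c0(2)] unfolding B_def d_def
      by (rule gaussian_matrix_norm_gt_prob[OF assms(3)])
    show "real (card C') \<le> 2 ^ r" using C'(2) by (simp add: of_nat_le_iff[symmetric])
  qed (use K assms(6) in \<open>simp add: d_def\<close>)
  finally show ?thesis unfolding d_def K_def \<delta>_def .
qed

lemma union_bound_le_exp_rate:
  fixes \<delta> \<eta> \<epsilon> :: real and r n :: nat
  assumes "0 < \<delta>" "\<delta> < 1 / exp 1" "\<eta> > 0"
    "real n \<ge> \<eta> * real r / log 2 (1 / (exp 1 * \<delta>))"
    "\<epsilon> > 0" "\<eta> / ln (1 / (exp 1 * \<delta>)) < \<epsilon>"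
  shows "2 ^ r * (exp (real n / 2) * ((exp 1 * \<delta>) powr ((1 + \<epsilon>) / \<eta>)) ^ n)
         \<le> exp (- 0.3 * \<epsilon> * real r)"
proof -
  define L where "L = ln (1 / (exp 1 * \<delta>))"
  have e\<delta>: "0 < exp 1 * \<delta>" "exp 1 * \<delta> < 1" using assms(1,2) by (auto simp: field_simps)
  then have L: "L > 0" unfolding L_def by simp
  define X where "X = real n * L / \<eta>"
  have "\<eta> * real r / (L / ln 2) \<le> real n"
    using assms(4) unfolding L_def log_def by simp
  then have rate: "real r * ln 2 \<le> X"
    using L assms(3) unfolding X_def by (simp add: field_simps)
  have "real r * 0.6 \<le> real r * ln 2" using ln2_ge_two_thirds by (intro mult_left_mono) auto
  then have rate_eps: "0.3 * \<epsilon> * real r \<le> \<epsilon> / 2 * X"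
    using rate assms(5) mult_left_mono[of "real r * 0.6" X "\<epsilon> / 2"] by simp
  have "1 < \<epsilon> * L / \<eta>" using assms(3,6) L unfolding L_def by (simp add: field_simps)
  then have "real n \<le> \<epsilon> * X"
    using mult_left_mono[of 1 "\<epsilon> * L / \<eta>" "real n"] unfolding X_def by (simp add: field_simps)
  then have exponent: "real r * ln 2 + real n / 2 - (1 + \<epsilon>) * X \<le> - 0.3 * \<epsilon> * real r"
    using rate rate_eps by (simp add: algebra_simps)
  have powr_eq: "((exp 1 * \<delta>) powr ((1 + \<epsilon>) / \<eta>)) ^ n = exp (- ((1 + \<epsilon>) * X))"
    using e\<delta> assms(1)
    by (simp add: powr_def L_def X_def ln_div exp_of_nat_mult[symmetric] field_simps)
  have "2 ^ r * (exp (real n / 2) * ((exp 1 * \<delta>) powr ((1 + \<epsilon>) / \<eta>)) ^ n)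
      = exp (real r * ln 2) * exp (real n / 2) * exp (- ((1 + \<epsilon>) * X))"
    using exp_of_nat_mult[of r "ln (2::real)"] by (simp add: powr_eq)
  also have "\<dots> = exp (real r * ln 2 + real n / 2 + - ((1 + \<epsilon>) * X))"
    by (simp only: exp_add)
  also have "\<dots> \<le> exp (- 0.3 * \<epsilon> * real r)"
    using exponent by simp
  finally show ?thesis .
qed

lemma threshold_ratio_le_powr:
  fixes \<delta> w d :: real
  assumes "0 < \<delta>" "0 < w" "0 < d"
  shows "(2 * sqrt d * \<delta> + 2 * \<delta>) / (sqrt d * ((2 * exp (- w) + 2 / sqrt d) * \<delta> powr (1 - w)))
         \<le> (exp 1 * \<delta>) powr w"
proof -
  have "(exp 1 * \<delta>) powr w = exp w * \<delta> powr w"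
    using assms(1) by (simp add: powr_def ln_mult distrib_left exp_add)
  then have "(exp 1 * \<delta>) powr w * (sqrt d * ((2 * exp (- w) + 2 / sqrt d) * \<delta> powr (1 - w)))
      = (2 * sqrt d + 2 * exp w) * (\<delta> powr w * \<delta> powr (1 - w))"
    using assms(3) by (simp add: exp_minus field_simps)
  also have "\<dots> = (2 * sqrt d + 2 * exp w) * \<delta>"
    using assms(1) by (simp flip: powr_add)
  also have "\<dots> \<ge> 2 * sqrt d * \<delta> + 2 * \<delta>"
    using assms by (simp add: algebra_simps)
  finally have "2 * sqrt d * \<delta> + 2 * \<delta>
      \<le> (exp 1 * \<delta>) powr w * (sqrt d * ((2 * exp (- w) + 2 / sqrt d) * \<delta> powr (1 - w)))" .
  moreover have "0 < sqrt d * ((2 * exp (- w) + 2 / sqrt d) * \<delta> powr (1 - w))"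
    using assms by (simp add: add_pos_pos)
  ultimately show ?thesis by (simp add: divide_le_eq mult.commute)
qed

theorem corollary2:
  fixes Q :: "(real^'n) set"
    and E :: "real^'n \<Rightarrow> nat" and D :: "nat \<Rightarrow> real^'n"
    and r :: nat and \<delta> \<zeta> \<eta> \<epsilon> :: real
    and M :: "'w measure" and A :: "'w \<Rightarrow> real^'n^'d"
    and xo :: "real^'n"
  assumes "compact Q"
    and "is_compression_code E r Q"
    and "\<delta> = distortion E D Q"
    and "0 < \<delta>" and "\<delta> < 1 / exp 1"
    and "\<eta> > 1"
    and "real CARD('d) \<ge> \<eta> * real r / log 2 (1 / (exp 1 * \<delta>))"
    and "gaussian_matrix M A"
    and "\<zeta> = \<delta>"
    and "\<epsilon> > 0"
    and "\<eta> / ln (1 / (exp 1 * \<delta>)) < \<epsilon>"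
    and "xo \<in> Q"
  shows "measure M {w \<in> space M. \<exists>z :: real^'d. norm z \<le> \<zeta> \<and>
            (\<exists>xhat \<in> ls_argmin (A w) (A w *v xo + z) (codebook E D Q).
               norm (xhat - xo) \<ge>
                 (2 * exp (- (1 + \<epsilon>) / \<eta>) + 2 / sqrt (real CARD('d)))
                   * \<zeta> powr (1 - (1 + \<epsilon>) / \<eta>))}
         \<le> exp (- real CARD('d) / 2) + exp (- 0.3 * \<epsilon> * real r)"
proof -
  define d where "d = real CARD('d)"
  define w where "w = (1 + \<epsilon>) / \<eta>"
  have w: "w > 0" using assms(6,10) by (simp add: w_def)
  define T where "T = (2 * exp (- w) + 2 / sqrt d) * \<delta> powr (1 - w)"
  have "T > 0" using assms(4) by (simp add: T_def d_def add_pos_pos)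
  from ls_decoding_error_prob_le[OF assms(1,2,8,12) assms(4) this, where D = D]
  have "measure M {\<omega> \<in> space M. \<exists>z :: real^'d. norm z \<le> \<delta> \<and>
            (\<exists>xhat \<in> ls_argmin (A \<omega>) (A \<omega> *v xo + z) (codebook E D Q). norm (xhat - xo) \<ge> T)}
        \<le> exp (- d / 2) + 2 ^ r * (exp (d / 2) *
             ((2 * sqrt d * \<delta> + 2 * \<delta>) / (sqrt d * T)) ^ CARD('d))"
    unfolding assms(3)[symmetric] d_def .
  also have "\<dots> \<le> exp (- d / 2) + 2 ^ r * (exp (d / 2) * ((exp 1 * \<delta>) powr w) ^ CARD('d))"
    using threshold_ratio_le_powr[OF assms(4) w, of d] assms(4) \<open>T > 0\<close>
    by (auto simp: T_def d_def intro!: power_mono divide_nonneg_pos)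
  also have "\<dots> \<le> exp (- d / 2) + exp (- 0.3 * \<epsilon> * real r)"
    using union_bound_le_exp_rate[OF assms(4,5) _ assms(7,10,11)] assms(6)
    unfolding w_def d_def by simp
  finally show ?thesis
    unfolding assms(9) T_def w_def d_def minus_divide_left .
qed

end
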